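(* Let $P$ be a finite poset and $I\in\mathcal{IC}(P)$. Then \[ \mathrm{Row}(I)=\mathrm{Inc}(I)\ \cup\ \Big(\Delta\big(\mathrm{Inc}_I(\lceil I\rceil)\big)-\big(I\cup\Delta(\lceil I\rceil)\big)\Big)\ \cup\ \Big(\Delta(\lceil I\rceil)-\Delta\big(\mathrm{Min}(I)\cap\Delta(\lceil I\rceil)\big)\Big). \]
   Context: All posets are finite. For a poset $P$, a subset $I\subseteq P$ is interval-closed if for all $x,y\in I$ and $z\in P$ with $x\le z\le y$ we have $z\in I$; $\mathcal{IC}(P)$ is the set of interval-closed subsets of $P$. For $x\in P$ the toggle $t_x:\mathcal{IC}(P)\to\mathcal{IC}(P)$ is defined by $t_x(I)=I\triangle\{x\}$ if $I\triangle\{x\}\in\mathcal{IC}(P)$ and $t_x(I)=I$ otherwise. Rowmotion is $\mathrm{Row}=t_{x_1}\circ t_{x_2}\circ\cdots\circ t_{x_N}:\mathcal{IC}(P)\to\mathcal{IC}(P)$, where $(x_1,\dots,x_N)$ is a linear extension of $P$ (so elements are toggled from the top of the poset down); this does not depend on the choice of linear extension. For $S\subseteq P$: $\Delta(S)$ is the smallest order ideal containing $S$ and $\nabla(S)$ the smallest order filter containing $S$ (both empty if $S=\emptyset$); $\mathrm{Inc}(S)=P-(\Delta(S)\cup\nabla(S))$ is the set of elements incomparable to every element of $S$; for $J\subseteq P$, $\mathrm{Inc}_J(S)=J\cap\mathrm{Inc}(S)$. $\mathrm{Min}(S)$ denotes the set of minimal elements of $S$ (in the induced order). The ceiling of $I\in\mathcal{IC}(P)$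 is $\lceil I\rceil=\mathrm{Min}(\nabla(I)-I)$. Set differences are written with $-$. *)

theory Defs
  imports Main
begin

text \<open>The finite poset P is the universe of a type of class order and finite.\<close>

definition interval_closed :: "('a::order) set \<Rightarrow> bool" where
  "interval_closed I \<longleftrightarrow> (\<forall>x\<in>I. \<forall>y\<in>I. \<forall>z. x \<le> z \<and> z \<le> y \<longrightarrow> z \<in> I)"

definition IC :: "('a::order) set set" where
  "IC = {I. interval_closed I}"

definition toggle :: "'a::order \<Rightarrow> 'a set \<Rightarrow> 'a set" where
  "toggle x I = (let J = (I - {x}) \<union> ({x} - I) in if J \<in> IC then J else I)"

definition linear_extension :: "('a::{order,finite}) list \<Rightarrow> bool" where
  "linear_extension xs \<longleftrightarrow> distinct xs \<and> set xs = UNIV \<and>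
     (\<forall>i<length xs. \<forall>j<length xs. xs ! i < xs ! j \<longrightarrow> i < j)"

text \<open>Row = t_{x1} o t_{x2} o ... o t_{xN} (so t_{xN} is applied first).\<close>
definition rowmotion :: "('a::{order,finite}) set \<Rightarrow> 'a set" where
  "rowmotion I = foldr toggle (SOME xs. linear_extension xs) I"

definition down_closure :: "('a::order) set \<Rightarrow> 'a set" where
  "down_closure S = {y. \<exists>x\<in>S. y \<le> x}"

definition up_closure :: "('a::order) set \<Rightarrow> 'a set" where
  "up_closure S = {y. \<exists>x\<in>S. x \<le> y}"

definition Inc :: "('a::order) set \<Rightarrow> 'a set" where
  "Inc S = UNIV - (down_closure S \<union> up_closure S)"

definition Inc_in :: "('a::order) set \<Rightarrow> 'a set \<Rightarrow> 'a set" where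
  "Inc_in J S = J \<inter> Inc S"

definition minimals :: "('a::order) set \<Rightarrow> 'a set" where
  "minimals S = {x\<in>S. \<not> (\<exists>y\<in>S. y < x)}"

definition ceiling_ic :: "('a::order) set \<Rightarrow> 'a set" where
  "ceiling_ic I = minimals (up_closure I - I)"

end

theory Submission
  imports Defs
begin

text \<open>
  Toggling along a linear extension from the top down, the state just before \<open>x\<close> is toggled
  agrees with the final result above \<open>x\<close> and with \<open>I\<close> below \<open>x\<close>. So the rowmotion of \<open>I\<close> is
  determined by local conditions: \<open>x\<close> lies in it exactly when its toggle in that mixed state leaves
  \<open>x\<close> present. For the right-hand side these conditions are checked separately on \<open>I\<close>, above \<open>I\<close>
  (where the formula picks out the ceiling), below \<open>I\<close>, and on the elements incomparable to \<open>I\<close>;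
  interval-closedness of \<open>I\<close> keeps "above" and "below" apart.
\<close>

lemma mem_IC_iff [simp]: "S \<in> IC \<longleftrightarrow> interval_closed S"
  by (simp add: IC_def)

lemma interval_closed_down_up:
  "interval_closed I \<Longrightarrow> x \<in> down_closure I \<Longrightarrow> x \<in> up_closure I \<Longrightarrow> x \<in> I"
  unfolding interval_closed_def down_closure_def up_closure_def by blast

lemma toggle_mem: "x \<in> S \<Longrightarrow> toggle x S = (if interval_closed (S - {x}) then S - {x} else S)"
proof -
  assume "x \<in> S"
  then have "(S - {x}) \<union> ({x} - S) = S - {x}" by auto
  then show ?thesis by (simp add: toggle_def)
qed

lemma toggle_not_mem: "x \<notin> S \<Longrightarrow> toggle x S = (if interval_closed (insert x S) then insert x S else S)"
proof -
  assume "x \<notin> S"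
  then have "(S - {x}) \<union> ({x} - S) = insert x S" by auto
  then show ?thesis by (simp add: toggle_def)
qed

lemma interval_closed_Diff_singleton_iff:
  assumes "interval_closed S" and "x \<in> S"
  shows "interval_closed (S - {x}) \<longleftrightarrow> \<not> ((\<exists>p\<in>S. p < x) \<and> (\<exists>q\<in>S. x < q))"
proof
  assume ic: "interval_closed (S - {x})"
  show "\<not> ((\<exists>p\<in>S. p < x) \<and> (\<exists>q\<in>S. x < q))"
  proof (intro notI; elim conjE bexE)
    fix p q assume "p \<in> S" "p < x" "q \<in> S" "x < q"
    then show False
      using ic[unfolded interval_closed_def, rule_format, of p q x] by (blast dest: less_imp_le less_imp_neq)
  qed
next
  assume no_gap: "\<not> ((\<exists>p\<in>S. p < x) \<and> (\<exists>q\<in>S. x < q))"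
  show "interval_closed (S - {x})"
    unfolding interval_closed_def
  proof (intro ballI allI impI)
    fix p q z assume p: "p \<in> S - {x}" and q: "q \<in> S - {x}" and pzq: "p \<le> z \<and> z \<le> q"
    then have "z \<in> S"
      using assms(1) unfolding interval_closed_def by blast
    moreover have "z \<noteq> x"
    proof
      assume "z = x"
      with p q pzq have "p < x" "x < q" by (auto simp: order_le_less)
      with p q no_gap show False by auto
    qed
    ultimately show "z \<in> S - {x}" by simp
  qed
qed

lemma interval_closed_insert_iff:
  assumes "interval_closed S" and "x \<notin> S"
  shows "interval_closed (insert x S) \<longleftrightarrow>
    \<not> (\<exists>z q. x < z \<and> z \<le> q \<and> q \<in> S \<and> z \<notin> S) \<and> \<not> (\<exists>p z. p \<le> z \<and> z < x \<and> p \<in> S \<and> z \<notin> S)"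
proof
  assume ic: "interval_closed (insert x S)"
  show "\<not> (\<exists>z q. x < z \<and> z \<le> q \<and> q \<in> S \<and> z \<notin> S) \<and> \<not> (\<exists>p z. p \<le> z \<and> z < x \<and> p \<in> S \<and> z \<notin> S)"
  proof (intro conjI notI; elim exE conjE)
    fix z q assume "x < z" "z \<le> q" "q \<in> S" "z \<notin> S"
    then show False
      using ic[unfolded interval_closed_def, rule_format, of x q z] by (blast dest: less_imp_le less_imp_neq)
  next
    fix p z assume "p \<le> z" "z < x" "p \<in> S" "z \<notin> S"
    then show False
      using ic[unfolded interval_closed_def, rule_format, of p x z] by (blast dest: less_imp_le less_imp_neq)
  qed
next
  assume no_gap: "\<not> (\<exists>z q. x < z \<and> z \<le> q \<and> q \<in> S \<and> z \<notin> S) \<and> \<not> (\<exists>p z. p \<le> z \<and> z < x \<and> p \<in> S \<and> z \<notin> S)"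
  show "interval_closed (insert x S)"
    unfolding interval_closed_def
  proof (intro ballI allI impI)
    fix p q z assume p: "p \<in> insert x S" and q: "q \<in> insert x S" and pzq: "p \<le> z \<and> z \<le> q"
    show "z \<in> insert x S"
    proof (cases "z = x")
      case False
      consider "p = x" "q = x" | "p = x" "q \<in> S" | "p \<in> S" "q = x" | "p \<in> S" "q \<in> S"
        using p q by blast
      then show ?thesis
      proof cases
        case 1
        with pzq have "z = x" by (blast intro: order.antisym)
        with False show ?thesis by simp
      next
        case 2
        with pzq False have "x < z" by (simp add: order_le_less)
        with 2 pzq no_gap show ?thesis by blast
      next
        case 3
        with pzq False have "z < x" by (simp add: order_le_less)
        with 3 pzq no_gap show ?thesis by blast
      next
        case 4
        with pzq assms(1) show ?thesis unfolding interval_closed_def by blast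
      qed
    qed simp
  qed
qed

lemma interval_closed_toggle: "interval_closed S \<Longrightarrow> interval_closed (toggle x S)"
  unfolding toggle_def Let_def by auto

lemma interval_closed_foldr_toggle: "interval_closed I \<Longrightarrow> interval_closed (foldr toggle xs I)"
  by (induction xs) (simp_all add: interval_closed_toggle)

text \<open>
  The two clauses say that removing \<open>x \<in> I\<close>, resp. inserting \<open>x \<notin> I\<close>, succeeds exactly when
  \<open>x \<notin> R\<close>, resp. \<open>x \<in> R\<close>, in the state that is \<open>R\<close> above \<open>x\<close> and \<open>I\<close> below \<open>x\<close>.
\<close>
definition row_conditions :: "('a::order) set \<Rightarrow> 'a set \<Rightarrow> bool" where
  "row_conditions I R \<longleftrightarrow>
    (\<forall>x\<in>I. x \<in> R \<longleftrightarrow> (\<exists>a\<in>I. a < x) \<and> (\<exists>b\<in>R. x < b)) \<and>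
    (\<forall>x. x \<notin> I \<longrightarrow> (x \<in> R \<longleftrightarrow>
       \<not> (\<exists>z b. x < z \<and> z \<le> b \<and> b \<in> R \<and> z \<notin> R) \<and> \<not> (\<exists>a z. a \<le> z \<and> z < x \<and> a \<in> I \<and> z \<notin> I)))"

lemma row_conditions_mem:
  "row_conditions I R \<Longrightarrow> x \<in> I \<Longrightarrow> x \<in> R \<longleftrightarrow> (\<exists>a\<in>I. a < x) \<and> (\<exists>b\<in>R. x < b)"
  unfolding row_conditions_def by blast

lemma row_conditions_not_mem:
  "row_conditions I R \<Longrightarrow> x \<notin> I \<Longrightarrow> x \<in> R \<longleftrightarrow>
     \<not> (\<exists>z b. x < z \<and> z \<le> b \<and> b \<in> R \<and> z \<notin> R) \<and> \<not> (\<exists>a z. a \<le> z \<and> z < x \<and> a \<in> I \<and> z \<notin> I)"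
  unfolding row_conditions_def by blast

lemma toggle_row_step:
  assumes row: "row_conditions I R"
    and x: "x \<notin> T" "\<forall>y. x < y \<longrightarrow> y \<in> T" "\<forall>y\<in>T. \<not> y < x"
    and ic: "interval_closed (R \<inter> T \<union> (I - T))"
  shows "toggle x (R \<inter> T \<union> (I - T)) = R \<inter> insert x T \<union> (I - insert x T)"
proof -
  define S where "S = R \<inter> T \<union> (I - T)"
  have above: "y \<in> S \<longleftrightarrow> y \<in> R" if "x < y" for y
    using that x unfolding S_def by auto
  have below: "y \<in> S \<longleftrightarrow> y \<in> I" if "y < x" for y
    using that x unfolding S_def by auto
  show ?thesis
  proof (cases "x \<in> I")
    case True
    then have "x \<in> S" using x unfolding S_def by auto
    have "(\<exists>p\<in>S. p < x) \<longleftrightarrow> (\<exists>a\<in>I. a < x)" using below by blast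
    moreover have "(\<exists>q\<in>S. x < q) \<longleftrightarrow> (\<exists>b\<in>R. x < b)" using above by blast
    ultimately have "interval_closed (S - {x}) \<longleftrightarrow> x \<notin> R"
      using row_conditions_mem[OF row True] interval_closed_Diff_singleton_iff[OF ic[folded S_def] \<open>x \<in> S\<close>]
      by simp
    then show ?thesis
      using toggle_mem[OF \<open>x \<in> S\<close>] True x unfolding S_def by auto
  next
    case False
    then have "x \<notin> S" using x unfolding S_def by auto
    have "(\<exists>z q. x < z \<and> z \<le> q \<and> q \<in> S \<and> z \<notin> S) \<longleftrightarrow> (\<exists>z b. x < z \<and> z \<le> b \<and> b \<in> R \<and> z \<notin> R)"
    proof -
      have "q \<in> S \<longleftrightarrow> q \<in> R" "z \<in> S \<longleftrightarrow> z \<in> R" if "x < z" "z \<le> q" for z q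
        using that above order.strict_trans2 by blast+
      then show ?thesis by blast
    qed
    moreover have "(\<exists>a z. a \<le> z \<and> z < x \<and> a \<in> S \<and> z \<notin> S) \<longleftrightarrow> (\<exists>a z. a \<le> z \<and> z < x \<and> a \<in> I \<and> z \<notin> I)"
    proof -
      have "a \<in> S \<longleftrightarrow> a \<in> I" "z \<in> S \<longleftrightarrow> z \<in> I" if "a \<le> z" "z < x" for a z
        using that below order.strict_trans1 by blast+
      then show ?thesis by blast
    qed
    ultimately have "interval_closed (insert x S) \<longleftrightarrow> x \<in> R"
      using row_conditions_not_mem[OF row False] interval_closed_insert_iff[OF ic[folded S_def] \<open>x \<notin> S\<close>]
      by simp
    then show ?thesis
      using toggle_not_mem[OF \<open>x \<notin> S\<close>] False x unfolding S_def by auto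
  qed
qed

lemma foldr_toggle_row:
  assumes row: "row_conditions I R" and ic: "interval_closed I"
  shows "distinct xs \<Longrightarrow> sorted_wrt (\<lambda>a b. \<not> b < a) xs \<Longrightarrow> (\<forall>x\<in>set xs. \<forall>y. x < y \<longrightarrow> y \<in> set xs) \<Longrightarrow>
    foldr toggle xs I = R \<inter> set xs \<union> (I - set xs)"
proof (induction xs)
  case Nil
  then show ?case by simp
next
  case (Cons x zs)
  have below: "\<forall>y\<in>set zs. \<not> y < x" using Cons.prems(2) by simp
  have "\<forall>y\<in>set zs. \<forall>w. y < w \<longrightarrow> w \<in> set zs"
    using Cons.prems(3) below by (metis list.set_intros(2) set_ConsD)
  then have IH: "foldr toggle zs I = R \<inter> set zs \<union> (I - set zs)"
    using Cons.IH Cons.prems by simp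
  have fresh: "x \<notin> set zs" using Cons.prems(1) by simp
  have above: "\<forall>y. x < y \<longrightarrow> y \<in> set zs"
    using Cons.prems(3) by auto
  have "interval_closed (R \<inter> set zs \<union> (I - set zs))"
    using interval_closed_foldr_toggle[OF ic, of zs] IH by simp
  then have "toggle x (R \<inter> set zs \<union> (I - set zs)) = R \<inter> insert x (set zs) \<union> (I - insert x (set zs))"
    by (rule toggle_row_step[OF row fresh above below])
  then show ?case using IH by simp
qed

lemma linear_extension_iff_sorted_wrt:
  "linear_extension xs \<longleftrightarrow> distinct xs \<and> set xs = UNIV \<and> sorted_wrt (\<lambda>a b. \<not> b < a) xs"
proof -
  have "(\<forall>i<length xs. \<forall>j<length xs. xs ! i < xs ! j \<longrightarrow> i < j) \<longleftrightarrow>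
        (\<forall>i j. i < j \<longrightarrow> j < length xs \<longrightarrow> \<not> xs ! j < xs ! i)"
  proof (intro iffI allI impI notI)
    fix i j assume "\<forall>i<length xs. \<forall>j<length xs. xs ! i < xs ! j \<longrightarrow> i < j"
      and "i < j" "j < length xs" "xs ! j < xs ! i"
    then have "j < i" by (meson order.strict_trans)
    with \<open>i < j\<close> show False by simp
  next
    fix i j assume "\<forall>i j. i < j \<longrightarrow> j < length xs \<longrightarrow> \<not> xs ! j < xs ! i"
      and "i < length xs" "j < length xs" "xs ! i < xs ! j"
    then show "i < j"
      by (cases i j rule: linorder_cases) auto
  qed
  then show ?thesis
    unfolding linear_extension_def sorted_wrt_iff_nth_less by simp
qed

lemma finite_ex_sorted_wrt_not_less:
  fixes A :: "('a::order) set"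
  shows "finite A \<Longrightarrow> \<exists>xs. distinct xs \<and> set xs = A \<and> sorted_wrt (\<lambda>a b. \<not> b < a) xs"
proof (induction "card A" arbitrary: A)
  case 0
  then show ?case by auto
next
  case (Suc n)
  then obtain m where m: "m \<in> A" "\<forall>b\<in>A. b \<le> m \<longrightarrow> b = m"
    using finite_has_minimal[OF Suc.prems] by force
  have "card (A - {m}) = n" using Suc.hyps(2) Suc.prems m(1) by simp
  then obtain xs where xs: "distinct xs" "set xs = A - {m}" "sorted_wrt (\<lambda>a b. \<not> b < a) xs"
    using Suc.hyps(1) Suc.prems by blast
  have "\<forall>y\<in>set xs. \<not> y < m" using xs(2) m(2) by (auto simp: order_le_less)
  then show ?case using xs m(1) by (intro exI[of _ "m # xs"]) auto
qed

lemma rowmotion_eq_if_row_conditions: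
  fixes I R :: "('a::{order,finite}) set"
  assumes "interval_closed I" and "row_conditions I R"
  shows "rowmotion I = R"
proof -
  obtain ys :: "'a list" where "linear_extension ys"
    using finite_ex_sorted_wrt_not_less[of "UNIV :: 'a set"] linear_extension_iff_sorted_wrt by auto
  then have "linear_extension (SOME xs :: 'a list. linear_extension xs)" by (rule someI[of linear_extension])
  then have "foldr toggle (SOME xs :: 'a list. linear_extension xs) I = R \<inter> UNIV \<union> (I - UNIV)"
    using foldr_toggle_row[OF assms(2,1)] unfolding linear_extension_iff_sorted_wrt by simp
  then show ?thesis
    unfolding rowmotion_def by simp
qed

definition row_formula :: "('a::order) set \<Rightarrow> 'a set" where
  "row_formula I = Inc I
    \<union> (down_closure (Inc_in I (ceiling_ic I)) - (I \<union> down_closure (ceiling_ic I)))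
    \<union> (down_closure (ceiling_ic I) - down_closure (minimals I \<inter> down_closure (ceiling_ic I)))"

lemma mem_ceiling_ic_iff:
  "c \<in> ceiling_ic I \<longleftrightarrow> (\<exists>i\<in>I. i \<le> c) \<and> c \<notin> I \<and> \<not> (\<exists>y. (\<exists>i\<in>I. i \<le> y) \<and> y \<notin> I \<and> y < c)"
  unfolding ceiling_ic_def minimals_def up_closure_def by auto

lemma row_formula_inside:
  assumes x: "x \<in> I"
  shows "x \<in> row_formula I \<longleftrightarrow> (\<exists>c\<in>ceiling_ic I. x \<le> c) \<and> (\<exists>a\<in>I. a < x)"
proof -
  have "x \<in> down_closure (minimals I \<inter> down_closure (ceiling_ic I)) \<longleftrightarrow>
      x \<in> minimals I \<and> x \<in> down_closure (ceiling_ic I)"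
    using x unfolding down_closure_def minimals_def by (auto simp: order_le_less)
  moreover have "x \<notin> Inc I" using x unfolding Inc_def down_closure_def by auto
  ultimately show ?thesis
    using x unfolding row_formula_def down_closure_def minimals_def by auto
qed

lemma row_formula_incomparable:
  "x \<notin> down_closure I \<Longrightarrow> x \<notin> up_closure I \<Longrightarrow> x \<in> row_formula I"
  unfolding row_formula_def Inc_def by auto

lemma row_formula_above:
  assumes ic: "interval_closed I" and x: "x \<in> up_closure I" "x \<notin> I"
  shows "x \<in> row_formula I \<longleftrightarrow> x \<in> ceiling_ic I"
proof
  have not_below: "x \<notin> down_closure I"
    using interval_closed_down_up[OF ic] x by blast
  assume "x \<in> row_formula I"
  with not_below x have "x \<in> down_closure (ceiling_ic I)"
    unfolding row_formula_def Inc_def Inc_in_def down_closure_def by auto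
  then obtain c where c: "c \<in> ceiling_ic I" "x \<le> c" unfolding down_closure_def by auto
  with x have "\<not> x < c" unfolding mem_ceiling_ic_iff up_closure_def by blast
  with c show "x \<in> ceiling_ic I" by (simp add: order_le_less)
next
  assume "x \<in> ceiling_ic I"
  moreover have "x \<notin> down_closure I"
    using interval_closed_down_up[OF ic] x by blast
  ultimately show "x \<in> row_formula I"
    unfolding row_formula_def down_closure_def minimals_def by auto
qed

lemma row_formula_below:
  assumes ic: "interval_closed I" and x: "x \<in> down_closure I" "x \<notin> I"
  shows "x \<in> row_formula I \<longleftrightarrow> x \<notin> down_closure (minimals I \<inter> down_closure (ceiling_ic I))"
proof -
  have not_above: "x \<notin> up_closure I"
    using interval_closed_down_up[OF ic] x by blast
  have "x \<in> down_closure (Inc_in I (ceiling_ic I))" if "x \<notin> down_closure (ceiling_ic I)"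
  proof -
    obtain i where i: "i \<in> I" "x \<le> i" using x unfolding down_closure_def by auto
    have "\<not> i \<le> c" if "c \<in> ceiling_ic I" for c
      using that i \<open>x \<notin> down_closure (ceiling_ic I)\<close> unfolding down_closure_def
      using order_trans by blast
    moreover have "\<not> c \<le> i" if "c \<in> ceiling_ic I" for c
      using that i ic unfolding mem_ceiling_ic_iff interval_closed_def by blast
    ultimately have "i \<in> Inc (ceiling_ic I)"
      unfolding Inc_def down_closure_def up_closure_def by blast
    with i show ?thesis unfolding down_closure_def Inc_in_def by auto
  qed
  moreover have "down_closure (minimals I \<inter> down_closure (ceiling_ic I)) \<subseteq> down_closure (ceiling_ic I)"
    unfolding down_closure_def by (auto intro: order_trans)
  ultimately show ?thesis
    using x not_above unfolding row_formula_def Inc_def by auto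
qed

lemma ceiling_subset_row_formula:
  assumes "interval_closed I"
  shows "ceiling_ic I \<subseteq> row_formula I"
proof
  fix c assume "c \<in> ceiling_ic I"
  moreover have "ceiling_ic I \<subseteq> up_closure I - I"
    unfolding ceiling_ic_def minimals_def by blast
  ultimately show "c \<in> row_formula I" using row_formula_above[OF assms] by blast
qed

lemma row_formula_downward_outside_down_closure:
  assumes ic: "interval_closed I" and z: "z \<notin> down_closure I"
    and "z \<le> b" and b: "b \<in> row_formula I"
  shows "z \<in> row_formula I"
proof (cases "z \<in> up_closure I")
  case False
  with z show ?thesis by (rule row_formula_incomparable)
next
  case True
  have "z \<notin> I" "b \<notin> I" using z \<open>z \<le> b\<close> unfolding down_closure_def by auto
  moreover have "b \<in> up_closure I"
    using True \<open>z \<le> b\<close> unfolding up_closure_def using order_trans by blast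
  ultimately have "b \<in> ceiling_ic I" using row_formula_above[OF ic] b by blast
  with True \<open>z \<notin> I\<close> \<open>z \<le> b\<close> have "z = b"
    unfolding mem_ceiling_ic_iff up_closure_def by (auto simp: order_le_less)
  with b show ?thesis by simp
qed

lemma ex_ceiling_above_if_le_row_formula:
  assumes ic: "interval_closed I" and "z \<in> I" "z \<le> b" "b \<in> row_formula I"
  shows "\<exists>c\<in>ceiling_ic I. z \<le> c"
proof (cases "b \<in> I")
  case True
  with assms row_formula_inside[OF True] show ?thesis by (meson order_trans)
next
  case False
  have "b \<in> up_closure I" using assms unfolding up_closure_def by blast
  with assms False have "b \<in> ceiling_ic I" using row_formula_above[OF ic] by blast
  with assms show ?thesis by blast
qed

lemma row_formula_mem_iff_between:
  assumes ic: "interval_closed I" and x: "x \<in> I"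
  shows "x \<in> row_formula I \<longleftrightarrow> (\<exists>a\<in>I. a < x) \<and> (\<exists>b\<in>row_formula I. x < b)"
proof -
  have "(\<exists>c\<in>ceiling_ic I. x \<le> c) \<longleftrightarrow> (\<exists>b\<in>row_formula I. x < b)"
  proof
    assume "\<exists>c\<in>ceiling_ic I. x \<le> c"
    then obtain c where c: "c \<in> ceiling_ic I" "x \<le> c" by blast
    with x have "x \<noteq> c" unfolding mem_ceiling_ic_iff by auto
    with c ceiling_subset_row_formula[OF ic] show "\<exists>b\<in>row_formula I. x < b"
      by (auto simp: order_le_less)
  next
    assume "\<exists>b\<in>row_formula I. x < b"
    then show "\<exists>c\<in>ceiling_ic I. x \<le> c"
      using ex_ceiling_above_if_le_row_formula[OF ic x] by (blast dest: less_imp_le)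
  qed
  then show ?thesis using row_formula_inside[OF x] by blast
qed

lemma ex_gap_below_iff:
  assumes "x \<notin> I"
  shows "(\<exists>a z. a \<le> z \<and> z < x \<and> a \<in> I \<and> z \<notin> I) \<longleftrightarrow> x \<in> up_closure I \<and> x \<notin> ceiling_ic I"
proof
  assume "\<exists>a z. a \<le> z \<and> z < x \<and> a \<in> I \<and> z \<notin> I"
  then obtain a z where az: "a \<le> z" "z < x" "a \<in> I" "z \<notin> I" by blast
  then have "a \<le> x" by (meson less_imp_le order_trans)
  with az have "x \<in> up_closure I" unfolding up_closure_def by blast
  moreover have "x \<notin> ceiling_ic I" using az unfolding mem_ceiling_ic_iff by blast
  ultimately show "x \<in> up_closure I \<and> x \<notin> ceiling_ic I" by blast
next
  assume "x \<in> up_closure I \<and> x \<notin> ceiling_ic I"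
  with assms show "\<exists>a z. a \<le> z \<and> z < x \<and> a \<in> I \<and> z \<notin> I"
    unfolding mem_ceiling_ic_iff up_closure_def by blast
qed

lemma no_gap_above_outside_down_closure:
  assumes ic: "interval_closed I" and x: "x \<notin> down_closure I"
  shows "\<not> (\<exists>z b. x < z \<and> z \<le> b \<and> b \<in> row_formula I \<and> z \<notin> row_formula I)"
proof
  assume "\<exists>z b. x < z \<and> z \<le> b \<and> b \<in> row_formula I \<and> z \<notin> row_formula I"
  then obtain z b where zb: "x < z" "z \<le> b" "b \<in> row_formula I" "z \<notin> row_formula I" by blast
  have "z \<notin> down_closure I"
    using x zb(1) unfolding down_closure_def by (blast dest: less_imp_le intro: order_trans)
  with zb show False using row_formula_downward_outside_down_closure[OF ic] by blast
qed

lemma gap_above_iff_below_minimal: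
  assumes ic: "interval_closed I" and x: "x \<in> down_closure I" "x \<notin> I"
  shows "(\<exists>z b. x < z \<and> z \<le> b \<and> b \<in> row_formula I \<and> z \<notin> row_formula I) \<longleftrightarrow>
    x \<in> down_closure (minimals I \<inter> down_closure (ceiling_ic I))"
proof
  assume "\<exists>z b. x < z \<and> z \<le> b \<and> b \<in> row_formula I \<and> z \<notin> row_formula I"
  then obtain z b where zb: "x < z" "z \<le> b" "b \<in> row_formula I" "z \<notin> row_formula I" by blast
  have "z \<in> down_closure (minimals I \<inter> down_closure (ceiling_ic I))"
  proof (cases "z \<in> I")
    case True
    then have "\<exists>c\<in>ceiling_ic I. z \<le> c"
      using ex_ceiling_above_if_le_row_formula[OF ic _ zb(2,3)] by blast
    with True zb(4) have "z \<in> minimals I \<inter> down_closure (ceiling_ic I)"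
      using row_formula_inside[OF True] unfolding minimals_def down_closure_def by blast
    then show ?thesis unfolding down_closure_def by blast
  next
    case False
    moreover have "z \<in> down_closure I"
      using row_formula_downward_outside_down_closure[OF ic _ zb(2,3)] zb(4) by blast
    ultimately show ?thesis using row_formula_below[OF ic] zb(4) by blast
  qed
  with zb(1) show "x \<in> down_closure (minimals I \<inter> down_closure (ceiling_ic I))"
    unfolding down_closure_def by (blast dest: less_imp_le intro: order_trans)
next
  assume "x \<in> down_closure (minimals I \<inter> down_closure (ceiling_ic I))"
  then obtain m c where m: "m \<in> minimals I" "x \<le> m" and c: "c \<in> ceiling_ic I" "m \<le> c"
    unfolding down_closure_def by blast
  have "m \<in> I" using m(1) unfolding minimals_def by blast
  then have "m \<notin> row_formula I" using row_formula_inside m(1) unfolding minimals_def by blast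
  moreover have "x < m" using m(2) \<open>m \<in> I\<close> x(2) by (auto simp: order_le_less)
  moreover have "c \<in> row_formula I" using ceiling_subset_row_formula[OF ic] c(1) by blast
  ultimately show "\<exists>z b. x < z \<and> z \<le> b \<and> b \<in> row_formula I \<and> z \<notin> row_formula I"
    using c(2) by (intro exI[of _ m] exI[of _ c]) simp
qed

lemma row_conditions_row_formula:
  assumes ic: "interval_closed I"
  shows "row_conditions I (row_formula I)"
  unfolding row_conditions_def
proof (intro conjI ballI allI impI)
  fix x assume "x \<in> I"
  then show "x \<in> row_formula I \<longleftrightarrow> (\<exists>a\<in>I. a < x) \<and> (\<exists>b\<in>row_formula I. x < b)"
    by (rule row_formula_mem_iff_between[OF ic])
next
  fix x assume x: "x \<notin> I"
  consider "x \<notin> down_closure I" "x \<notin> up_closure I" | "x \<in> up_closure I" | "x \<in> down_closure I"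
    by blast
  then show "x \<in> row_formula I \<longleftrightarrow>
      \<not> (\<exists>z b. x < z \<and> z \<le> b \<and> b \<in> row_formula I \<and> z \<notin> row_formula I) \<and>
      \<not> (\<exists>a z. a \<le> z \<and> z < x \<and> a \<in> I \<and> z \<notin> I)"
  proof cases
    case 1
    then show ?thesis
      using row_formula_incomparable no_gap_above_outside_down_closure[OF ic 1(1)]
        ex_gap_below_iff[OF x] by simp
  next
    case 2
    then have "x \<notin> down_closure I" using interval_closed_down_up[OF ic] x by blast
    then show ?thesis
      using row_formula_above[OF ic 2 x] no_gap_above_outside_down_closure[OF ic]
        ex_gap_below_iff[OF x] 2 by simp
  next
    case 3
    then have "x \<notin> up_closure I" using interval_closed_down_up[OF ic] x by blast
    then show ?thesis
      using row_formula_below[OF ic 3 x] gap_above_iff_below_minimal[OF ic 3 x]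
        ex_gap_below_iff[OF x] by simp
  qed
qed

theorem theorem2p15:
  fixes I :: "('a::{order,finite}) set"
  assumes "I \<in> IC"
  shows "rowmotion I =
    Inc I
    \<union> (down_closure (Inc_in I (ceiling_ic I)) - (I \<union> down_closure (ceiling_ic I)))
    \<union> (down_closure (ceiling_ic I) - down_closure (minimals I \<inter> down_closure (ceiling_ic I)))"
proof -
  have "interval_closed I" using assms by simp
  then have "rowmotion I = row_formula I"
    using rowmotion_eq_if_row_conditions row_conditions_row_formula by blast
  then show ?thesis unfolding row_formula_def .
qed

end
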